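(* Let $\mathbb{F}_q$ be a finite field and let $T_1=\{A=(a_{ij})\in UU_4(\mathbb{F}_q): a_{34}=0\}$, a subgroup of the group $UU_4(\mathbb{F}_q)$ of $4\times4$ upper triangular unipotent matrices over $\mathbb{F}_q$. Then $T_1$ is an AC-group and $\omega(T_1)=q^2+1$.
   Context: A group is an AC-group if the centralizer of every non-central element is abelian. A subset $N$ of a group is non-commuting if $xy\ne yx$ for all distinct $x,y\in N$; $\omega(S)$ is the maximum cardinality of a non-commuting subset of $S$. *)

theory Defs
  imports "HOL-Algebra.Group"
begin

text \<open>4x4 matrices over a field are represented as functions nat => nat => 'a,
  indices 0..3 (so the paper's entry a_ij is A (i-1) (j-1)), with all entries
  outside the range {0..3}x{0..3} equal to 0.\<close>

definition mat4_mult :: "(nat \<Rightarrow> nat \<Rightarrow> 'a::comm_ring_1) \<Rightarrow> (nat \<Rightarrow> nat \<Rightarrow> 'a) \<Rightarrow> nat \<Rightarrow> nat \<Rightarrow> 'a" where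
  "mat4_mult A B = (\<lambda>i j. if i < 4 \<and> j < 4 then (\<Sum>k<4. A i k * B k j) else 0)"

definition mat4_one :: "nat \<Rightarrow> nat \<Rightarrow> 'a::comm_ring_1" where
  "mat4_one = (\<lambda>i j. if i < 4 \<and> j < 4 \<and> i = j then 1 else 0)"

definition UU4 :: "(nat \<Rightarrow> nat \<Rightarrow> 'a::comm_ring_1) set" where
  "UU4 = {A. (\<forall>i j. (4 \<le> i \<or> 4 \<le> j) \<longrightarrow> A i j = 0)
            \<and> (\<forall>i<4. A i i = 1) \<and> (\<forall>i<4. \<forall>j<i. A i j = 0)}"

text \<open>T_1 = {A in UU_4 : a_34 = 0}; a_34 is A 2 3 with 0-based indices.\<close>
definition T1 :: "(nat \<Rightarrow> nat \<Rightarrow> 'a::comm_ring_1) set" where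
  "T1 = {A \<in> UU4. A 2 3 = 0}"

definition UU4_group :: "'a::comm_ring_1 itself \<Rightarrow> (nat \<Rightarrow> nat \<Rightarrow> 'a) monoid" where
  "UU4_group _ = \<lparr>carrier = UU4, mult = mat4_mult, one = mat4_one\<rparr>"

definition T1_group :: "'a::comm_ring_1 itself \<Rightarrow> (nat \<Rightarrow> nat \<Rightarrow> 'a) monoid" where
  "T1_group _ = \<lparr>carrier = T1, mult = mat4_mult, one = mat4_one\<rparr>"

definition centralizer :: "('g, 'b) monoid_scheme \<Rightarrow> 'g \<Rightarrow> 'g set" where
  "centralizer G x = {y \<in> carrier G. x \<otimes>\<^bsub>G\<^esub> y = y \<otimes>\<^bsub>G\<^esub> x}"

definition group_center :: "('g, 'b) monoid_scheme \<Rightarrow> 'g set" where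
  "group_center G = {x \<in> carrier G. \<forall>y \<in> carrier G. x \<otimes>\<^bsub>G\<^esub> y = y \<otimes>\<^bsub>G\<^esub> x}"

definition AC_group :: "('g, 'b) monoid_scheme \<Rightarrow> bool" where
  "AC_group G \<longleftrightarrow> group G \<and>
     (\<forall>x \<in> carrier G. x \<notin> group_center G \<longrightarrow>
        (\<forall>y \<in> centralizer G x. \<forall>z \<in> centralizer G x. y \<otimes>\<^bsub>G\<^esub> z = z \<otimes>\<^bsub>G\<^esub> y))"

definition non_commuting :: "('g, 'b) monoid_scheme \<Rightarrow> 'g set \<Rightarrow> bool" where
  "non_commuting G N \<longleftrightarrow> (\<forall>x \<in> N. \<forall>y \<in> N. x \<noteq> y \<longrightarrow> x \<otimes>\<^bsub>G\<^esub> y \<noteq> y \<otimes>\<^bsub>G\<^esub> x)"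

definition omega :: "('g, 'b) monoid_scheme \<Rightarrow> nat" where
  "omega G = Max {card N | N. N \<subseteq> carrier G \<and> non_commuting G N}"

end

theory Submission
  imports Defs "HOL-Library.Cardinality"
begin

text \<open>An element of \<open>T\<^sub>1\<close> is determined by its five free entries \<open>a\<^sub>1\<^sub>2, a\<^sub>1\<^sub>3, a\<^sub>1\<^sub>4, a\<^sub>2\<^sub>3, a\<^sub>2\<^sub>4\<close>,
  and in these coordinates two elements commute iff the vectors \<open>(a\<^sub>1\<^sub>2, a\<^sub>2\<^sub>3, a\<^sub>2\<^sub>4)\<close> have
  vanishing minors \<open>a\<^sub>1\<^sub>2 a'\<^sub>2\<^sub>3 = a'\<^sub>1\<^sub>2 a\<^sub>2\<^sub>3\<close> and \<open>a\<^sub>1\<^sub>2 a'\<^sub>2\<^sub>4 = a'\<^sub>1\<^sub>2 a\<^sub>2\<^sub>4\<close>. The centre consists of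
  the elements with \<open>a\<^sub>1\<^sub>2 = a\<^sub>2\<^sub>3 = a\<^sub>2\<^sub>4 = 0\<close>; every other element has a well-defined
  "slope": \<open>\<infinity>\<close> if \<open>a\<^sub>1\<^sub>2 = 0\<close>, and \<open>(a\<^sub>2\<^sub>3/a\<^sub>1\<^sub>2, a\<^sub>2\<^sub>4/a\<^sub>1\<^sub>2) \<in> \<bbbF>\<^sub>q\<^sup>2\<close> otherwise. Two non-central
  elements commute iff their slopes agree, so commuting with a fixed non-central element
  is transitive among non-central elements (the AC property), a non-commuting set has at
  most one element per slope, and one representative per slope gives \<open>q\<^sup>2 + 1\<close> pairwise
  non-commuting elements.\<close>

lemma nat_cases_4: obtains "(i::nat) = 0" | "i = 1" | "i = 2" | "i = 3" | "4 \<le> i"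
  by linarith

lemma sum_lessThan_4: "(\<Sum>k<(4::nat). f k) = f 0 + f 1 + f 2 + (f 3 :: 'a::comm_monoid_add)"
  by (simp add: eval_nat_numeral add.assoc)

lemma mat4_mult_assoc: "mat4_mult (mat4_mult A B) C = mat4_mult A (mat4_mult B C)"
  unfolding mat4_mult_def sum_lessThan_4 by (auto intro!: ext simp: algebra_simps)

lemma mat4_mult_one_left: "X \<in> UU4 \<Longrightarrow> mat4_mult mat4_one X = X"
proof (intro ext)
  fix i j :: nat
  assume "X \<in> UU4"
  then show "mat4_mult mat4_one X i j = X i j"
    unfolding mat4_mult_def mat4_one_def UU4_def sum_lessThan_4
    by (cases i rule: nat_cases_4; cases j rule: nat_cases_4) simp_all
qed

lemma mat4_mult_one_right: "X \<in> UU4 \<Longrightarrow> mat4_mult X mat4_one = X"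
proof (intro ext)
  fix i j :: nat
  assume "X \<in> UU4"
  then show "mat4_mult X mat4_one i j = X i j"
    unfolding mat4_mult_def mat4_one_def UU4_def sum_lessThan_4
    by (cases i rule: nat_cases_4; cases j rule: nat_cases_4) simp_all
qed

lemma mat4_mult_UU4:
  assumes "X \<in> UU4" "Y \<in> UU4"
  shows "mat4_mult X Y \<in> UU4"
  unfolding UU4_def
proof (intro CollectI conjI allI impI)
  fix i j :: nat
  show "(4 \<le> i \<or> 4 \<le> j) \<Longrightarrow> mat4_mult X Y i j = 0"
    by (auto simp: mat4_mult_def)
  show "i < 4 \<Longrightarrow> mat4_mult X Y i i = 1"
    using assms unfolding mat4_mult_def UU4_def sum_lessThan_4
    by (cases i rule: nat_cases_4) simp_all
  show "i < 4 \<Longrightarrow> j < i \<Longrightarrow> mat4_mult X Y i j = 0"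
    using assms unfolding mat4_mult_def UU4_def sum_lessThan_4
    by (cases i rule: nat_cases_4; cases j rule: nat_cases_4) simp_all
qed

lemma mat4_one_UU4: "mat4_one \<in> UU4"
  unfolding mat4_one_def UU4_def by auto

lemma monoid_UU4_group: "monoid (UU4_group F)"
  by (rule monoidI)
     (auto simp: UU4_group_def mat4_mult_UU4 mat4_one_UU4 mat4_mult_assoc
                 mat4_mult_one_left mat4_mult_one_right)

text \<open>The arguments of \<open>t1_mat\<close> are the entries \<open>a\<^sub>1\<^sub>2, a\<^sub>1\<^sub>3, a\<^sub>1\<^sub>4, a\<^sub>2\<^sub>3, a\<^sub>2\<^sub>4\<close>.\<close>

definition t1_mat :: "'a::comm_ring_1 \<Rightarrow> 'a \<Rightarrow> 'a \<Rightarrow> 'a \<Rightarrow> 'a \<Rightarrow> nat \<Rightarrow> nat \<Rightarrow> 'a" where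
  "t1_mat a b c d e = (\<lambda>i j. if i = j \<and> i < 4 then 1
     else if i = 0 \<and> j = 1 then a else if i = 0 \<and> j = 2 then b
     else if i = 0 \<and> j = 3 then c else if i = 1 \<and> j = 2 then d
     else if i = 1 \<and> j = 3 then e else 0)"

lemma t1_mat_entries [simp]:
  "t1_mat a b c d e 0 1 = a" "t1_mat a b c d e 0 2 = b" "t1_mat a b c d e 0 3 = c"
  "t1_mat a b c d e 1 2 = d" "t1_mat a b c d e 1 3 = e"
  "t1_mat a b c d e 0 (Suc 0) = a" "t1_mat a b c d e (Suc 0) 2 = d"
  "t1_mat a b c d e (Suc 0) 3 = e"
  by (simp_all add: t1_mat_def)

lemma t1_mat_in_T1: "t1_mat a b c d e \<in> T1"
  unfolding T1_def UU4_def t1_mat_def by auto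

lemma T1_eq_t1_mat:
  assumes "X \<in> T1"
  shows "X = t1_mat (X 0 1) (X 0 2) (X 0 3) (X 1 2) (X 1 3)"
proof (intro ext)
  fix i j :: nat
  show "X i j = t1_mat (X 0 1) (X 0 2) (X 0 3) (X 1 2) (X 1 3) i j"
    using assms unfolding T1_def UU4_def t1_mat_def
    by (cases i rule: nat_cases_4; cases j rule: nat_cases_4) simp_all
qed

lemma T1_cases:
  assumes "X \<in> T1"
  obtains a b c d e where "X = t1_mat a b c d e"
  using T1_eq_t1_mat[OF assms] by blast

lemma t1_mat_eq_iff:
  "t1_mat a b c d e = t1_mat a' b' c' d' e' \<longleftrightarrow> a = a' \<and> b = b' \<and> c = c' \<and> d = d' \<and> e = e'"
  by (metis t1_mat_entries)

lemma mat4_mult_t1_mat: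
  "mat4_mult (t1_mat a b c d e) (t1_mat a' b' c' d' e') =
     t1_mat (a + a') (b + b' + a * d') (c + c' + a * e') (d + d') (e + e')"
proof (intro ext)
  fix i j :: nat
  show "mat4_mult (t1_mat a b c d e) (t1_mat a' b' c' d' e') i j =
     t1_mat (a + a') (b + b' + a * d') (c + c' + a * e') (d + d') (e + e') i j"
    unfolding mat4_mult_def t1_mat_def sum_lessThan_4
    by (cases i rule: nat_cases_4; cases j rule: nat_cases_4) (simp_all add: algebra_simps)
qed

lemma mat4_one_eq_t1_mat: "mat4_one = t1_mat 0 0 0 0 0"
  unfolding mat4_one_def t1_mat_def by (auto intro!: ext)

lemma T1_subset_UU4: "T1 \<subseteq> UU4"
  unfolding T1_def by auto

lemma mat4_one_in_T1: "mat4_one \<in> T1"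
  unfolding mat4_one_eq_t1_mat by (rule t1_mat_in_T1)

lemma mat4_mult_T1: "X \<in> T1 \<Longrightarrow> Y \<in> T1 \<Longrightarrow> mat4_mult X Y \<in> T1"
  by (metis T1_cases mat4_mult_t1_mat t1_mat_in_T1)

definition t1_inv :: "(nat \<Rightarrow> nat \<Rightarrow> 'a::comm_ring_1) \<Rightarrow> nat \<Rightarrow> nat \<Rightarrow> 'a" where
  "t1_inv X = t1_mat (- X 0 1) (- X 0 2 + X 0 1 * X 1 2) (- X 0 3 + X 0 1 * X 1 3)
                     (- X 1 2) (- X 1 3)"

lemma t1_inv_in_T1: "t1_inv X \<in> T1"
  unfolding t1_inv_def by (rule t1_mat_in_T1)

lemma
  assumes "X \<in> T1"
  shows mat4_mult_t1_inv_left: "mat4_mult (t1_inv X) X = mat4_one"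
    and mat4_mult_t1_inv_right: "mat4_mult X (t1_inv X) = mat4_one"
  using assms
  by (auto elim!: T1_cases simp: t1_inv_def mat4_mult_t1_mat mat4_one_eq_t1_mat)

lemma subgroup_T1_UU4_group: "subgroup T1 (UU4_group (F :: 'a::comm_ring_1 itself))"
proof
  fix X :: "nat \<Rightarrow> nat \<Rightarrow> 'a" assume X: "X \<in> T1"
  then have "t1_inv X = inv\<^bsub>UU4_group F\<^esub> X"
    using monoid.inv_unique'[OF monoid_UU4_group] T1_subset_UU4 t1_inv_in_T1
          mat4_mult_t1_inv_left mat4_mult_t1_inv_right
    by (fastforce simp: UU4_group_def)
  then show "inv\<^bsub>UU4_group F\<^esub> X \<in> T1"
    using t1_inv_in_T1 by metis
qed (use T1_subset_UU4 mat4_mult_T1 in \<open>auto simp: UU4_group_def mat4_one_in_T1\<close>)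

lemma group_T1_group: "group (T1_group F)"
proof (rule groupI)
  fix X assume "X \<in> carrier (T1_group F)"
  then show "\<exists>Y\<in>carrier (T1_group F). Y \<otimes>\<^bsub>T1_group F\<^esub> X = \<one>\<^bsub>T1_group F\<^esub>"
    using mat4_mult_t1_inv_left t1_inv_in_T1 by (auto simp: T1_group_def)
qed (use T1_subset_UU4 in \<open>auto simp: T1_group_def mat4_mult_T1 mat4_mult_assoc
                                  mat4_mult_one_left mat4_one_in_T1\<close>)

lemma T1_commute_iff:
  assumes "X \<in> T1" "Y \<in> T1"
  shows "mat4_mult X Y = mat4_mult Y X \<longleftrightarrow>
           X 0 1 * Y 1 2 = Y 0 1 * X 1 2 \<and> X 0 1 * Y 1 3 = Y 0 1 * X 1 3"
  using assms by (auto elim!: T1_cases simp: mat4_mult_t1_mat t1_mat_eq_iff algebra_simps)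

definition t1_central :: "(nat \<Rightarrow> nat \<Rightarrow> 'a::comm_ring_1) \<Rightarrow> bool" where
  "t1_central X \<longleftrightarrow> X 0 1 = 0 \<and> X 1 2 = 0 \<and> X 1 3 = 0"

text \<open>\<open>None\<close> plays the role of the slope \<open>\<infinity>\<close>.\<close>

definition t1_slope :: "(nat \<Rightarrow> nat \<Rightarrow> 'a::field) \<Rightarrow> ('a \<times> 'a) option" where
  "t1_slope X = (if X 0 1 = 0 then None else Some (X 1 2 / X 0 1, X 1 3 / X 0 1))"

lemma t1_central_in_group_center:
  "X \<in> T1 \<Longrightarrow> t1_central X \<Longrightarrow> X \<in> group_center (T1_group F)"
  by (auto simp: group_center_def T1_group_def T1_commute_iff t1_central_def)

lemma T1_commute_iff_slope:
  assumes "X \<in> T1" "Y \<in> T1"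
  shows "mat4_mult X Y = mat4_mult Y X \<longleftrightarrow>
           t1_central X \<or> t1_central Y \<or> t1_slope X = t1_slope Y"
  unfolding T1_commute_iff[OF assms] t1_central_def t1_slope_def
  by (auto simp: field_simps)

lemma AC_group_T1_group: "AC_group (T1_group (F :: 'a::field itself))"
  unfolding AC_group_def
proof (intro conjI group_T1_group ballI impI)
  fix X Y Z
  assume X: "X \<in> carrier (T1_group F)" and "X \<notin> group_center (T1_group F)"
    and Y: "Y \<in> centralizer (T1_group F) X" and Z: "Z \<in> centralizer (T1_group F) X"
  then have "X \<in> T1" "\<not> t1_central X"
    using t1_central_in_group_center by (auto simp: T1_group_def)
  moreover have "Y \<in> T1" "Z \<in> T1" "mat4_mult X Y = mat4_mult Y X" "mat4_mult X Z = mat4_mult Z X"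
    using Y Z by (auto simp: centralizer_def T1_group_def)
  ultimately show "Y \<otimes>\<^bsub>T1_group F\<^esub> Z = Z \<otimes>\<^bsub>T1_group F\<^esub> Y"
    by (auto simp: T1_group_def T1_commute_iff_slope)
qed

lemma omega_eqI:
  assumes "\<And>N. N \<subseteq> carrier G \<Longrightarrow> non_commuting G N \<Longrightarrow> card N \<le> n"
    and "N \<subseteq> carrier G" "non_commuting G N" "card N = n"
  shows "omega G = n"
proof -
  let ?S = "{card N |N. N \<subseteq> carrier G \<and> non_commuting G N}"
  have "?S \<subseteq> {..n}"
    using assms(1) by auto
  then have "finite ?S"
    by (rule finite_subset) simp
  then show ?thesis
    unfolding omega_def using assms by (intro Max_eqI) auto
qed

lemma card_non_commuting_T1_le:
  assumes "N \<subseteq> carrier (T1_group (F :: 'a::{field, finite} itself))"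
    and "non_commuting (T1_group F) N"
  shows "card N \<le> CARD('a) ^ 2 + 1"
proof -
  have "inj_on t1_slope N"
  proof (rule inj_onI, rule ccontr)
    fix X Y assume XY: "X \<in> N" "Y \<in> N" "t1_slope X = t1_slope Y" "X \<noteq> Y"
    then have "X \<in> T1" "Y \<in> T1"
      using assms(1) by (auto simp: T1_group_def)
    then have "mat4_mult X Y = mat4_mult Y X"
      using XY(3) by (simp add: T1_commute_iff_slope)
    with XY assms(2) show False
      by (auto simp: non_commuting_def T1_group_def)
  qed
  then have "card N \<le> CARD(('a \<times> 'a) option)"
    by (rule card_inj_on_le) auto
  then show ?thesis
    by (simp add: power2_eq_square)
qed

definition t1_slope_rep :: "('a \<times> 'a) option \<Rightarrow> nat \<Rightarrow> nat \<Rightarrow> 'a::field" where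
  "t1_slope_rep u = (case u of None \<Rightarrow> t1_mat 0 0 0 1 0 | Some (d, e) \<Rightarrow> t1_mat 1 0 0 d e)"

lemma t1_slope_rep_in_T1: "t1_slope_rep u \<in> T1"
  by (simp add: t1_slope_rep_def t1_mat_in_T1 split: option.split)

lemma t1_slope_t1_slope_rep: "t1_slope (t1_slope_rep u) = u"
  by (auto simp: t1_slope_rep_def t1_slope_def split: option.split)

lemma not_t1_central_t1_slope_rep: "\<not> t1_central (t1_slope_rep u)"
  by (auto simp: t1_slope_rep_def t1_central_def split: option.split)

lemma non_commuting_range_t1_slope_rep:
  "non_commuting (T1_group F) (range t1_slope_rep)"
  by (auto simp: non_commuting_def T1_group_def T1_commute_iff_slope t1_slope_rep_in_T1
                 t1_slope_t1_slope_rep not_t1_central_t1_slope_rep)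

lemma card_range_t1_slope_rep:
  "card (range (t1_slope_rep :: _ \<Rightarrow> _ \<Rightarrow> _ \<Rightarrow> 'a::{field, finite})) = CARD('a) ^ 2 + 1"
proof -
  have "inj (t1_slope_rep :: _ \<Rightarrow> _ \<Rightarrow> _ \<Rightarrow> 'a)"
    by (rule inj_on_inverseI[of _ t1_slope]) (rule t1_slope_t1_slope_rep)
  then show ?thesis
    by (simp add: card_image power2_eq_square)
qed

theorem lemma4p4:
  fixes F :: "'a::{field, finite} itself"
  shows "subgroup T1 (UU4_group F)
       \<and> AC_group (T1_group F)
       \<and> omega (T1_group F) = (card (UNIV :: 'a set)) ^ 2 + 1"
proof (intro conjI subgroup_T1_UU4_group AC_group_T1_group)
  show "omega (T1_group F) = CARD('a) ^ 2 + 1"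
  proof (rule omega_eqI)
    show "range t1_slope_rep \<subseteq> carrier (T1_group F)"
      using t1_slope_rep_in_T1 by (auto simp: T1_group_def)
  qed (use card_non_commuting_T1_le non_commuting_range_t1_slope_rep
           card_range_t1_slope_rep in auto)
qed

end
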